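(* Let $\beta$ be a distortion risk measure that is neither the mean $\mathbb{E}$ nor an affine function of the mean. Then recursively applying the risk-sensitive Bellman optimality operator $\mathcal{T}^*_\beta$ with respect to $\beta$, i.e. forming $Z_{k+1}=\mathcal{T}^*_\beta Z_k$ from an arbitrary initial value distribution $Z_0$, does not (in general) solve the RSRL objective, and $\beta[Z_k]$ is not guaranteed to converge to $\beta[Z^*]$. In particular, the inequality $\|\beta[\mathcal{T}^*_\beta Z_1]-\beta[\mathcal{T}^*_\beta Z_2]\|_\infty\le\gamma\|\beta[Z_1]-\beta[Z_2]\|_\infty$ is not guaranteed to hold for all value distributions $Z_1,Z_2$.
   Context: Consider an MDP with state space $\mathcal{S}$, action space $\mathcal{A}$, deterministic transition map $M:\mathcal{S}\times\mathcal{A}\to\mathcal{S}$, reward distribution $R(s,a)$ (a real random variable for each $(s,a)$), initial state distribution $\rho_0$ and discount $\gamma\in[0,1)$. A value distribution $Z$ assigns to each $(s,a)$ a real random variable $Z(s,a)$ with bounded moments; for a policy $\pi$, $Z^\pi(s,a)=\sum_{t\ge0}\gamma^t R(s_t,a_t)$ is the random discounted return starting from $(s,a)$ and following $\pi$. A distortion risk measure $\beta$ with distortion function $h_\beta:[0,1]\to[0,1]$ (continuous, non-decreasing) is $\beta[X]=\int_{-\infty}^{\infty}x\,\frac{\partial}{\partial x}(h_\beta\circ F_X)(x)\,dx$, where $F_X$ is the CDF of $X$; the mean corresponds to $h_\beta=\mathrm{id}$. Given $Z$, let $\pi_\beta(s)\in\arg\max_{a\in\mathcal{A}}\beta[Z(s,a)]$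 (ties broken arbitrarily), and define $\mathcal{T}^*_\beta Z(s,a)$ to have the same distribution as $R(s,a)+\gamma Z(s',A')$ with $s'=M(s,a)$, $A'\sim\pi_\beta(\cdot\mid s')$. The RSRL objective is to find a policy $\pi^*_\beta\in\arg\max_\pi\mathbb{E}_{S_0\sim\rho_0,A_0\sim\pi}\big[\beta[Z^\pi(S_0,A_0)]\big]$, with $Z^*$ the return distribution of such an optimal policy. For real-valued functions $f_1,f_2$ on $\mathcal{S}\times\mathcal{A}$, $\|f_1-f_2\|_\infty=\sup_{s,a}|f_1(s,a)-f_2(s,a)|$. *)

theory Defs
  imports "HOL-Probability.Probability" "HOL-Probability.Convolution"
begin

definition distortion :: "(real \<Rightarrow> real) \<Rightarrow> bool" where
  "distortion h \<longleftrightarrow> continuous_on {0..1} h \<and> mono_on {0..1} h \<and> h ` {0..1} \<subseteq> {0..1}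
     \<and> h 0 = 0 \<and> h 1 = 1"

definition drm :: "(real \<Rightarrow> real) \<Rightarrow> real measure \<Rightarrow> real" where
  "drm h \<mu> = integral\<^sup>L (interval_measure (\<lambda>x. h (cdf \<mu> x))) (\<lambda>x. x)"

definition value_dist :: "real measure \<Rightarrow> bool" where
  "value_dist \<mu> \<longleftrightarrow> prob_space \<mu> \<and> sets \<mu> = sets borel \<and>
     (\<forall>n::nat. integrable \<mu> (\<lambda>x. \<bar>x\<bar> ^ n))"

definition mean :: "real measure \<Rightarrow> real" where
  "mean \<mu> = integral\<^sup>L \<mu> (\<lambda>x. x)"

text \<open>State space S, action space A, deterministic transition Mt, reward distributions R,
  discount g, initial distribution rho0.\<close>
definition mdp :: "nat set \<Rightarrow> nat set \<Rightarrow> (nat \<Rightarrow> nat \<Rightarrow> nat) \<Rightarrow> (nat \<Rightarrow> nat \<Rightarrow> real measure)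
    \<Rightarrow> real \<Rightarrow> nat pmf \<Rightarrow> bool" where
  "mdp S A Mt R g rho0 \<longleftrightarrow> finite S \<and> S \<noteq> {} \<and> finite A \<and> A \<noteq> {} \<and>
     (\<forall>s\<in>S. \<forall>a\<in>A. Mt s a \<in> S \<and> prob_space (R s a) \<and> sets (R s a) = sets borel) \<and>
     0 \<le> g \<and> g < 1 \<and> set_pmf rho0 \<subseteq> S"

definition value_distribution :: "nat set \<Rightarrow> nat set \<Rightarrow> (nat \<Rightarrow> nat \<Rightarrow> real measure) \<Rightarrow> bool" where
  "value_distribution S A Z \<longleftrightarrow> (\<forall>s\<in>S. \<forall>a\<in>A. value_dist (Z s a))"

definition greedy :: "(real \<Rightarrow> real) \<Rightarrow> nat set \<Rightarrow> nat set \<Rightarrow> (nat \<Rightarrow> nat \<Rightarrow> real measure)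
    \<Rightarrow> (nat \<Rightarrow> nat) \<Rightarrow> bool" where
  "greedy h S A Z p \<longleftrightarrow> (\<forall>s\<in>S. p s \<in> A \<and> (\<forall>a\<in>A. drm h (Z s a) \<le> drm h (Z s (p s))))"

text \<open>Risk-sensitive distributional Bellman optimality operator, for the greedy policy p:
  law of R(s,a) + g * Z(s', p s'), reward independent of the next-state return.\<close>
definition bellman :: "(nat \<Rightarrow> nat \<Rightarrow> nat) \<Rightarrow> (nat \<Rightarrow> nat \<Rightarrow> real measure) \<Rightarrow> real
    \<Rightarrow> (nat \<Rightarrow> nat) \<Rightarrow> (nat \<Rightarrow> nat \<Rightarrow> real measure) \<Rightarrow> nat \<Rightarrow> nat \<Rightarrow> real measure" where
  "bellman Mt R g p Z s a = convolution (R s a) (distr (Z (Mt s a) (p (Mt s a))) borel (\<lambda>x. g * x))"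

definition supnorm :: "nat set \<Rightarrow> nat set \<Rightarrow> (nat \<Rightarrow> nat \<Rightarrow> real) \<Rightarrow> real" where
  "supnorm S A f = Sup {\<bar>f s a\<bar> | s a. s \<in> S \<and> a \<in> A}"

definition policy :: "nat set \<Rightarrow> nat set \<Rightarrow> (nat \<Rightarrow> nat pmf) \<Rightarrow> bool" where
  "policy S A p \<longleftrightarrow> (\<forall>s\<in>S. set_pmf (p s) \<subseteq> A)"

text \<open>Law of the truncated return sum_{t<=n} g^t R(s_t,a_t), rewards drawn independently.\<close>
fun trunc_ret :: "(nat \<Rightarrow> nat \<Rightarrow> nat) \<Rightarrow> (nat \<Rightarrow> nat \<Rightarrow> real measure) \<Rightarrow> real
    \<Rightarrow> (nat \<Rightarrow> nat pmf) \<Rightarrow> nat \<Rightarrow> nat \<Rightarrow> nat \<Rightarrow> real measure" where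
  "trunc_ret Mt R g p 0 s a = R s a"
| "trunc_ret Mt R g p (Suc n) s a =
     convolution (R s a)
       (distr (measure_pmf (p (Mt s a)) \<bind> (\<lambda>a'. trunc_ret Mt R g p n (Mt s a) a'))
          borel (\<lambda>x. g * x))"

definition return_dist :: "(nat \<Rightarrow> nat \<Rightarrow> nat) \<Rightarrow> (nat \<Rightarrow> nat \<Rightarrow> real measure) \<Rightarrow> real
    \<Rightarrow> (nat \<Rightarrow> nat pmf) \<Rightarrow> nat \<Rightarrow> nat \<Rightarrow> real measure" where
  "return_dist Mt R g p s a =
     (THE \<mu>. real_distribution \<mu> \<and> weak_conv_m (\<lambda>n. trunc_ret Mt R g p n s a) \<mu>)"

definition objective :: "(real \<Rightarrow> real) \<Rightarrow> (nat \<Rightarrow> nat \<Rightarrow> nat) \<Rightarrow> (nat \<Rightarrow> nat \<Rightarrow> real measure)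
    \<Rightarrow> real \<Rightarrow> nat pmf \<Rightarrow> (nat \<Rightarrow> nat pmf) \<Rightarrow> real" where
  "objective h Mt R g rho0 p =
     measure_pmf.expectation rho0
       (\<lambda>s. measure_pmf.expectation (p s) (\<lambda>a. drm h (return_dist Mt R g p s a)))"

definition optimal :: "(real \<Rightarrow> real) \<Rightarrow> nat set \<Rightarrow> nat set \<Rightarrow> (nat \<Rightarrow> nat \<Rightarrow> nat)
    \<Rightarrow> (nat \<Rightarrow> nat \<Rightarrow> real measure) \<Rightarrow> real \<Rightarrow> nat pmf \<Rightarrow> (nat \<Rightarrow> nat pmf) \<Rightarrow> bool" where
  "optimal h S A Mt R g rho0 p \<longleftrightarrow> policy S A p \<and>
     (\<forall>q. policy S A q \<longrightarrow> objective h Mt R g rho0 q \<le> objective h Mt R g rho0 p)"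

definition bellman_iteration :: "(real \<Rightarrow> real) \<Rightarrow> nat set \<Rightarrow> nat set \<Rightarrow> (nat \<Rightarrow> nat \<Rightarrow> nat)
    \<Rightarrow> (nat \<Rightarrow> nat \<Rightarrow> real measure) \<Rightarrow> real \<Rightarrow> (nat \<Rightarrow> nat \<Rightarrow> real measure)
    \<Rightarrow> (nat \<Rightarrow> nat \<Rightarrow> nat \<Rightarrow> real measure) \<Rightarrow> (nat \<Rightarrow> nat \<Rightarrow> nat) \<Rightarrow> bool" where
  "bellman_iteration h S A Mt R g Z0 Zs ps \<longleftrightarrow>
     (\<forall>s\<in>S. \<forall>a\<in>A. Zs 0 s a = Z0 s a) \<and>
     (\<forall>k. greedy h S A (Zs k) (ps k)) \<and>
     (\<forall>k. \<forall>s\<in>S. \<forall>a\<in>A. Zs (Suc k) s a = bellman Mt R g (ps k) (Zs k) s a)"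

end

theory Submission
  imports Defs
begin

(* A distortion risk measure that is not affine in the mean has a distortion h different from the
   identity.  Since h is continuous with h 0 = 0 and h 1 = 1, a maximum argument shows that h must
   then violate h x + h y = h (x y) + h (x + y - x y) for some x, y in [0, 1].  Take the two-point
   laws coin x, coin y on {0, 1} (with mass x resp. y at 0) and the point mass at beta[coin y]:
   the two candidate next-state returns have the same risk, yet after adding the independent reward
   coin x and discounting by 1/2 their risks differ by half the defect of the equation.  So the
   Bellman operator does not contract beta-values.  Moving the point mass by half the defect
   yields next-state returns whose greedy order is reversed by the reward; in a three-state chain
   the greedy Bellman iteration then stays at a fixed point whose greedy policy is suboptimal. *)

section \<open>Finitely supported laws as Borel measures\<close>

definition borel_pmf :: "real pmf \<Rightarrow> real measure" where
  "borel_pmf P = distr (measure_pmf P) borel (\<lambda>x. x)"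

lemma sets_borel_pmf [simp, measurable_cong]: "sets (borel_pmf P) = sets borel"
  by (simp add: borel_pmf_def)

lemma emeasure_borel_pmf: "A \<in> sets borel \<Longrightarrow> emeasure (borel_pmf P) A = emeasure (measure_pmf P) A"
  by (simp add: borel_pmf_def emeasure_distr)

lemma real_distribution_borel_pmf: "real_distribution (borel_pmf P)"
  unfolding real_distribution_def real_distribution_axioms_def borel_pmf_def
  by (auto intro!: prob_space.prob_space_distr simp: measure_pmf.prob_space_axioms)

lemma prob_space_borel_pmf: "prob_space (borel_pmf P)"
  using real_distribution_borel_pmf by (simp add: real_distribution_def)

lemma cdf_borel_pmf: "cdf (borel_pmf P) x = measure_pmf.prob P {..x}"
  by (simp add: cdf_def borel_pmf_def measure_distr)

lemma integral_borel_pmf: "integral\<^sup>L (borel_pmf P) (\<lambda>x. x) = measure_pmf.expectation P (\<lambda>x. x)"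
  by (simp add: borel_pmf_def integral_distr)

lemma value_dist_borel_pmf: "finite (set_pmf P) \<Longrightarrow> value_dist (borel_pmf P)"
  using prob_space_borel_pmf[of P]
  by (simp add: value_dist_def borel_pmf_def integrable_distr_eq integrable_measure_pmf_finite)

lemma distr_borel_pmf:
  assumes [measurable]: "f \<in> borel_measurable borel"
  shows "distr (borel_pmf P) borel f = borel_pmf (map_pmf f P)"
proof (rule measure_eqI)
  fix A :: "real set" assume "A \<in> sets (distr (borel_pmf P) borel f)"
  then have "f -` A \<in> sets borel" by (simp add: measurable_sets_borel[OF assms])
  then show "emeasure (distr (borel_pmf P) borel f) A = emeasure (borel_pmf (map_pmf f P)) A"
    using \<open>A \<in> _\<close> by (simp add: emeasure_distr emeasure_borel_pmf)
qed simp

lemma bind_borel_pmf: "measure_pmf q \<bind> (\<lambda>a. borel_pmf (K a)) = borel_pmf (bind_pmf q K)"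
proof -
  have meas: "(\<lambda>a. borel_pmf (K a)) \<in> measurable (measure_pmf q) (subprob_algebra borel)"
    by (auto simp: space_subprob_algebra prob_space_borel_pmf prob_space_imp_subprob_space)
  show ?thesis
    by (rule measure_eqI)
      (use meas in \<open>simp_all add: sets_bind[where N=borel] emeasure_bind[where N=borel] emeasure_borel_pmf\<close>)
qed

lemma convolution_borel_pmf:
  "convolution (borel_pmf P) (borel_pmf Q) = borel_pmf (map_pmf (\<lambda>(a, b). a + b) (pair_pmf P Q))"
proof (rule measure_eqI)
  fix A :: "real set" assume "A \<in> sets (borel_pmf P \<star> borel_pmf Q)"
  then have [measurable]: "A \<in> sets borel" by (simp add: convolution_def)
  interpret Q: sigma_finite_measure "borel_pmf Q"
    using prob_space_borel_pmf by (simp add: prob_space_imp_sigma_finite)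
  have "(\<lambda>(x, y). indicator A (x + y) :: ennreal) \<in> borel_measurable (borel \<Otimes>\<^sub>M borel_pmf Q)"
    by measurable
  from Q.borel_measurable_nn_integral_fst[OF this]
  have [measurable]: "(\<lambda>x. \<integral>\<^sup>+y. indicator A (x + y) \<partial>borel_pmf Q) \<in> borel_measurable borel"
    by simp
  have "emeasure (borel_pmf P \<star> borel_pmf Q) A
      = \<integral>\<^sup>+x. \<integral>\<^sup>+y. indicator A (x + y) \<partial>borel_pmf Q \<partial>borel_pmf P"
    by (intro convolution_emeasure') (auto simp: prob_space_borel_pmf prob_space_imp_sigma_finite
        prob_space.finite_measure)
  also have "\<dots> = \<integral>\<^sup>+x. \<integral>\<^sup>+y. indicator A (x + y) \<partial>borel_pmf Q \<partial>measure_pmf P"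
    unfolding borel_pmf_def[of P] by (simp add: nn_integral_distr)
  also have "\<dots> = \<integral>\<^sup>+x. \<integral>\<^sup>+y. indicator A (x + y) \<partial>measure_pmf Q \<partial>measure_pmf P"
    by (simp add: borel_pmf_def nn_integral_distr)
  also have "\<dots> = \<integral>\<^sup>+z. indicator ((\<lambda>(a, b). a + b) -` A) z \<partial>pair_pmf P Q"
    by (subst nn_integral_pair_pmf') (simp add: indicator_def)
  also have "\<dots> = emeasure (borel_pmf (map_pmf (\<lambda>(a, b). a + b) (pair_pmf P Q))) A"
    by (simp add: emeasure_borel_pmf)
  finally show "emeasure (borel_pmf P \<star> borel_pmf Q) A = emeasure (borel_pmf (map_pmf (\<lambda>(a, b). a + b) (pair_pmf P Q))) A" .
qed (simp add: convolution_def)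

section \<open>Distortion risk measures of finitely supported laws\<close>

lemma measure_pmf_atMost_eq_lessThan:
  fixes x :: "'a :: linorder"
  assumes "x \<notin> set_pmf P"
  shows "measure_pmf.prob P {..x} = measure_pmf.prob P {..<x}"
proof -
  have "{..x} - {..<x} = {x}" "{..<x} - {..x} = {}"
    by auto
  then show ?thesis
    using assms by (intro measure_prob_cong_0) (auto simp: pmf_eq_0_set_pmf)
qed

lemma sum_distorted_jumps:
  fixes h :: "real \<Rightarrow> real" and P :: "real pmf"
  assumes h0: "h 0 = 0" and "finite W" "W \<subseteq> {..<y}" "set_pmf P \<inter> {..<y} \<subseteq> W"
  shows "(\<Sum>v\<in>W. h (measure_pmf.prob P {..v}) - h (measure_pmf.prob P {..<v}))
    = h (measure_pmf.prob P {..<y})"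
  using assms(2-4)
proof (induction W arbitrary: y rule: finite_linorder_max_induct)
  case empty
  then have "measure_pmf.prob P {..<y} = measure_pmf.prob P {}"
    by (intro measure_prob_cong_0) (auto simp: pmf_eq_0_set_pmf)
  then show ?case using h0 by simp
next
  case (insert b W)
  have "(\<Sum>v\<in>W. h (measure_pmf.prob P {..v}) - h (measure_pmf.prob P {..<v}))
      = h (measure_pmf.prob P {..<b})"
    using insert by (intro insert.IH) auto
  moreover have "set_pmf P \<inter> {b<..<y} = {}"
    using insert by fastforce
  then have "measure_pmf.prob P {..b} = measure_pmf.prob P {..<y}"
    using insert by (intro measure_prob_cong_0) (auto simp: pmf_eq_0_set_pmf)
  moreover have "b \<notin> W"
    using insert.hyps by blast
  ultimately show ?case
    using insert.hyps by simp
qed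

lemma interval_measure_cdf:
  assumes "real_distribution M"
  shows "interval_measure (cdf M) = M"
proof -
  interpret real_distribution M by fact
  have "real_distribution (interval_measure (cdf M))"
    by (rule real_distribution_interval_measure)
      (auto simp: cdf_nondecreasing cdf_is_right_cont cdf_lim_at_bot cdf_lim_at_top_prob)
  moreover have "cdf (interval_measure (cdf M)) = cdf M"
    by (rule cdf_interval_measure) (auto simp: cdf_nondecreasing cdf_is_right_cont cdf_lim_at_bot)
  ultimately show ?thesis
    using assms by (intro cdf_unique) auto
qed

text \<open>For finite support, \<open>h \<circ> F\<close> is the cdf of \<open>distort_pmf h P\<close> (for infinite support
  \<open>embed_pmf\<close> is applied outside its domain and the result is meaningless).\<close>
definition distort_pmf :: "(real \<Rightarrow> real) \<Rightarrow> real pmf \<Rightarrow> real pmf" where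
  "distort_pmf h P = embed_pmf (\<lambda>v. h (measure_pmf.prob P {..v}) - h (measure_pmf.prob P {..<v}))"

context
  fixes h :: "real \<Rightarrow> real" and P :: "real pmf"
  assumes h: "distortion h" and fin: "finite (set_pmf P)"
begin

lemma pmf_distort_pmf:
  "pmf (distort_pmf h P) v = h (measure_pmf.prob P {..v}) - h (measure_pmf.prob P {..<v})"
  unfolding distort_pmf_def
proof (rule pmf_embed_pmf)
  let ?J = "\<lambda>v. h (measure_pmf.prob P {..v}) - h (measure_pmf.prob P {..<v})"
  have h0: "h 0 = 0" and h1: "h 1 = 1" and mono: "mono_on {0..1} h"
    using h by (auto simp: distortion_def)
  show J_nonneg: "0 \<le> ?J v" for v
    by (auto intro!: mono_onD[OF mono] measure_pmf.finite_measure_mono)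
  have J_zero: "?J v = 0" if "v \<notin> set_pmf P" for v
    using measure_pmf_atMost_eq_lessThan[OF that] by simp
  let ?y = "Max (set_pmf P) + 1"
  have "measure_pmf.prob P {..<?y} = 1"
    using fin by (subst measure_pmf.prob_eq_1) (auto simp: AE_measure_pmf_iff dest: Max_ge)
  then have "(\<Sum>v\<in>set_pmf P. ?J v) = 1"
    using fin by (subst sum_distorted_jumps[of h, OF h0, of _ ?y]) (auto simp: h1 dest: Max_ge)
  then show "(\<integral>\<^sup>+v. ennreal (?J v) \<partial>count_space UNIV) = 1"
    using fin J_zero J_nonneg by (subst nn_integral_count_space'[of "set_pmf P"]) auto
qed

lemma set_distort_pmf: "set_pmf (distort_pmf h P) \<subseteq> set_pmf P"
  by (auto simp: set_pmf_eq pmf_distort_pmf measure_pmf_atMost_eq_lessThan)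

lemma sum_distorted_jumps_atMost:
  "(\<Sum>v\<in>set_pmf P \<inter> {..x}. h (measure_pmf.prob P {..v}) - h (measure_pmf.prob P {..<v}))
    = h (measure_pmf.prob P {..x})"
proof -
  have h0: "h 0 = 0"
    using h by (simp add: distortion_def)
  have below: "(\<Sum>v\<in>set_pmf P \<inter> {..<x}. h (measure_pmf.prob P {..v}) - h (measure_pmf.prob P {..<v}))
      = h (measure_pmf.prob P {..<x})"
    using fin by (intro sum_distorted_jumps[of h, OF h0]) auto
  show ?thesis
  proof (cases "x \<in> set_pmf P")
    case True
    then have "set_pmf P \<inter> {..x} = insert x (set_pmf P \<inter> {..<x})"
      by auto
    with below fin show ?thesis
      by simp
  next
    case False
    then have "set_pmf P \<inter> {..x} = set_pmf P \<inter> {..<x}"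
      by (auto simp: order.order_iff_strict)
    with below False show ?thesis
      by (simp add: measure_pmf_atMost_eq_lessThan)
  qed
qed

lemma cdf_distort_pmf: "cdf (borel_pmf (distort_pmf h P)) x = h (cdf (borel_pmf P) x)"
proof -
  have "measure_pmf.prob (distort_pmf h P) {..x} = measure_pmf.prob (distort_pmf h P) (set_pmf P \<inter> {..x})"
    using set_distort_pmf by (intro measure_prob_cong_0) (auto simp: pmf_eq_0_set_pmf)
  also have "\<dots> = h (measure_pmf.prob P {..x})"
    using fin by (simp add: measure_measure_pmf_finite pmf_distort_pmf sum_distorted_jumps_atMost)
  finally show ?thesis
    by (simp add: cdf_borel_pmf)
qed

lemma drm_borel_pmf:
  assumes "finite V" "set_pmf P \<subseteq> V"
  shows "drm h (borel_pmf P) = (\<Sum>v\<in>V. v * (h (measure_pmf.prob P {..v}) - h (measure_pmf.prob P {..<v})))"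
proof -
  have "interval_measure (\<lambda>x. h (cdf (borel_pmf P) x)) = borel_pmf (distort_pmf h P)"
    using interval_measure_cdf[OF real_distribution_borel_pmf] by (simp add: cdf_distort_pmf[symmetric])
  then have "drm h (borel_pmf P) = measure_pmf.expectation (distort_pmf h P) (\<lambda>x. x)"
    by (simp add: drm_def integral_borel_pmf)
  also have "\<dots> = (\<Sum>v\<in>V. pmf (distort_pmf h P) v *\<^sub>R v)"
    using assms set_distort_pmf by (intro integral_measure_pmf) auto
  finally show ?thesis
    by (simp add: pmf_distort_pmf mult.commute)
qed

end

lemma measure_pmf_eq_sum_indicator:
  assumes "finite V" "set_pmf P \<subseteq> V"
  shows "measure_pmf.prob P A = (\<Sum>v\<in>V. pmf P v * indicator A v)"
proof -
  have "measure_pmf.prob P A = measure_pmf.prob P (V \<inter> A)"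
    using assms by (intro measure_prob_cong_0) (auto simp: pmf_eq_0_set_pmf)
  then show ?thesis
    using assms(1) by (simp add: measure_measure_pmf_finite Int_def)
qed

definition discounted_sum_pmf :: "real \<Rightarrow> real pmf \<Rightarrow> real pmf \<Rightarrow> real pmf" where
  "discounted_sum_pmf g P Q = map_pmf (\<lambda>(a, b). a + g * b) (pair_pmf P Q)"

lemma convolution_borel_pmf_scaled:
  "convolution (borel_pmf P) (distr (borel_pmf Q) borel (\<lambda>x. g * x)) = borel_pmf (discounted_sum_pmf g P Q)"
  by (simp add: distr_borel_pmf convolution_borel_pmf discounted_sum_pmf_def pair_map_pmf2
      map_pmf_comp case_prod_unfold)

lemma set_discounted_sum_pmf:
  "set_pmf (discounted_sum_pmf g P Q) = (\<lambda>(a, b). a + g * b) ` (set_pmf P \<times> set_pmf Q)"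
  by (simp add: discounted_sum_pmf_def)

lemma discounted_sum_pmf_return_0: "discounted_sum_pmf g P (return_pmf 0) = P"
  by (simp add: discounted_sum_pmf_def pair_return_pmf2 map_pmf_comp)

lemma measure_discounted_sum_pmf:
  assumes "finite VP" "set_pmf P \<subseteq> VP" "finite VQ" "set_pmf Q \<subseteq> VQ"
  shows "measure_pmf.prob (discounted_sum_pmf g P Q) A =
    (\<Sum>a\<in>VP. \<Sum>b\<in>VQ. pmf P a * pmf Q b * indicator A (a + g * b))"
proof -
  have "measure_pmf.prob (discounted_sum_pmf g P Q) A
      = measure_pmf.prob (pair_pmf P Q) ((\<lambda>(a, b). a + g * b) -` A)"
    by (simp add: discounted_sum_pmf_def)
  also have "\<dots> = (\<Sum>(a, b)\<in>VP \<times> VQ. pmf (pair_pmf P Q) (a, b) * indicator A (a + g * b))"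
    using assms by (subst measure_pmf_eq_sum_indicator[of "VP \<times> VQ"])
      (auto simp: indicator_def case_prod_unfold)
  finally show ?thesis
    by (simp add: sum.cartesian_product pmf_pair)
qed

text \<open>\<open>coin x\<close> has mass \<open>x\<close> at 0 and \<open>1 - x\<close> at 1, so its cdf at 0 is \<open>x\<close>.\<close>
definition coin :: "real \<Rightarrow> real pmf" where
  "coin x = map_pmf of_bool (bernoulli_pmf (1 - x))"

lemma set_coin: "set_pmf (coin x) \<subseteq> {0, 1}"
  by (auto simp: coin_def)

lemma finite_set_coin: "finite (set_pmf (coin x))"
  using set_coin by (rule finite_subset) simp

lemma pmf_coin:
  assumes "x \<in> {0..1}"
  shows "pmf (coin x) 0 = x" "pmf (coin x) 1 = 1 - x"
proof -
  have "inj (of_bool :: bool \<Rightarrow> real)"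
    by (simp add: inj_def)
  from pmf_map_inj'[OF this, of _ False] pmf_map_inj'[OF this, of _ True]
  show "pmf (coin x) 0 = x" "pmf (coin x) 1 = 1 - x"
    using assms by (simp_all add: coin_def)
qed

lemma measure_coin:
  "x \<in> {0..1} \<Longrightarrow> measure_pmf.prob (coin x) A = x * indicator A 0 + (1 - x) * indicator A 1"
  by (subst measure_pmf_eq_sum_indicator[OF _ set_coin])
    (simp_all add: pmf_coin del: Indicator_Function.sum_mult_indicator sum_mult_indicator)

context
  fixes h :: "real \<Rightarrow> real"
  assumes h: "distortion h"
begin

lemma drm_return: "drm h (borel_pmf (return_pmf c)) = c"
  using h by (subst drm_borel_pmf[of _ _ "{c}"]) (auto simp: distortion_def)

lemma drm_coin: "x \<in> {0..1} \<Longrightarrow> drm h (borel_pmf (coin x)) = 1 - h x"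
  using h by (subst drm_borel_pmf[OF _ finite_set_coin _ set_coin])
    (auto simp: distortion_def measure_coin)

lemma drm_discounted_coin_return:
  assumes "x \<in> {0..1}"
  shows "drm h (borel_pmf (discounted_sum_pmf (1/2) (coin x) (return_pmf c))) = 1 + c / 2 - h x"
proof -
  let ?P = "discounted_sum_pmf (1/2) (coin x) (return_pmf c)"
  have prob: "measure_pmf.prob ?P A = x * indicator A (c / 2) + (1 - x) * indicator A (1 + c / 2)" for A
    using assms by (subst measure_discounted_sum_pmf[OF _ set_coin, of "{c}"]) (simp_all add: pmf_coin del: sum_mult_indicator)
  have supp: "set_pmf ?P \<subseteq> {c / 2, 1 + c / 2}"
    using set_coin[of x] by (auto simp: set_discounted_sum_pmf)
  show ?thesis
    using h by (subst drm_borel_pmf[OF h finite_subset[OF supp] _ supp])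
      (simp_all add: prob distortion_def algebra_simps)
qed

lemma drm_discounted_coin_coin:
  assumes "x \<in> {0..1}" "y \<in> {0..1}"
  shows "drm h (borel_pmf (discounted_sum_pmf (1/2) (coin x) (coin y)))
    = 3/2 - (h (x * y) + h x + h (x + y - x * y)) / 2"
proof -
  let ?P = "discounted_sum_pmf (1/2) (coin x) (coin y)"
  have prob: "measure_pmf.prob ?P A
      = x * y * indicator A 0 + x * (1 - y) * indicator A (1/2) + (1 - x) * y * indicator A 1
        + (1 - x) * (1 - y) * indicator A (3/2)" for A
    using assms by (subst measure_discounted_sum_pmf[OF _ set_coin _ set_coin]) (simp_all add: pmf_coin del: sum_mult_indicator)
  have supp: "set_pmf ?P \<subseteq> {0, 1/2, 1, 3/2}"
    using set_coin[of x] set_coin[of y] by (fastforce simp: set_discounted_sum_pmf)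
  have "x * y + x * (1 - y) = x" "x * y + x * (1 - y) + (1 - x) * y = x + y - x * y"
    "x * y + x * (1 - y) + (1 - x) * y + (1 - x) * (1 - y) = 1"
    by (simp_all add: algebra_simps)
  then show ?thesis
    using h by (subst drm_borel_pmf[OF h finite_subset[OF supp] _ supp])
      (simp_all add: prob distortion_def algebra_simps)
qed

lemma drm_discounted_coin_gap:
  assumes "x \<in> {0..1}" "y \<in> {0..1}"
  shows "drm h (borel_pmf (discounted_sum_pmf (1/2) (coin x) (coin y)))
      - drm h (borel_pmf (discounted_sum_pmf (1/2) (coin x) (return_pmf (drm h (borel_pmf (coin y))))))
    = (h x + h y - h (x * y) - h (x + y - x * y)) / 2"
  unfolding drm_discounted_coin_coin[OF assms] drm_discounted_coin_return[OF assms(1)] drm_coin[OF assms(2)]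
  by (simp add: field_simps)

end

section \<open>Distortions that are not affine in the mean\<close>

lemma modular_on_unit_interval_le_0:
  fixes k :: "real \<Rightarrow> real"
  assumes cont: "continuous_on {0..1} k" and k0: "k 0 = 0" and k1: "k 1 = 0"
    and modular: "\<And>x y. x \<in> {0..1} \<Longrightarrow> y \<in> {0..1} \<Longrightarrow> k x + k y = k (x * y) + k (x + y - x * y)"
    and u: "u \<in> {0..1}"
  shows "k u \<le> 0"
proof -
  obtain m where m: "m \<in> {0..1}" and max: "\<And>u. u \<in> {0..1} \<Longrightarrow> k u \<le> k m"
    using continuous_attains_sup[of "{0..1}" k] cont by auto
  have closed: "x * y \<in> {0..1}" "x + y - x * y \<in> {0..1}" if "x \<in> {0..1}" "y \<in> {0..1}" for x y :: real
  proof -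
    have "0 \<le> (1 - x) * (1 - y)" "0 \<le> x * (1 - y)" "x * y \<le> 1"
      using that by (auto intro: mult_le_one)
    then show "x * y \<in> {0..1}" "x + y - x * y \<in> {0..1}"
      using that by (auto simp: algebra_simps)
  qed
  have pow: "m ^ n \<in> {0..1}" for n
    using m by (auto intro: power_le_one)
  \<comment> \<open>At a maximiser \<open>m\<close> the equation for \<open>m\<close> and \<open>m ^ Suc n\<close> has two terms \<open>\<le> k m\<close> on the
    right, which forces \<open>k (m ^ Suc (Suc n)) = k m\<close>; then let \<open>n \<rightarrow> \<infinity>\<close>.\<close>
  have powers: "k (m ^ Suc n) = k m" for n
  proof (induction n)
    case (Suc n)
    have "k m + k (m ^ Suc n) = k (m * m ^ Suc n) + k (m + m ^ Suc n - m * m ^ Suc n)"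
      by (rule modular[OF m pow])
    moreover have "k (m * m ^ Suc n) \<le> k m" "k (m + m ^ Suc n - m * m ^ Suc n) \<le> k m"
      using max closed[OF m pow] by blast+
    ultimately show ?case
      using Suc unfolding power_Suc[of m "Suc n"] by linarith
  qed simp
  have "k m = 0"
  proof (cases "m = 1")
    case False
    then have "(\<lambda>n. m ^ Suc n) \<longlonglongrightarrow> 0"
      using m by (intro LIMSEQ_Suc LIMSEQ_power_zero) auto
    then have "(\<lambda>n. k (m ^ Suc n)) \<longlonglongrightarrow> k 0"
      using pow by (intro continuous_on_tendsto_compose[OF cont]) (auto simp del: power_Suc)
    then show ?thesis
      using k0 by (simp add: powers LIMSEQ_const_iff del: power_Suc)
  qed (simp add: k1)
  then show ?thesis
    using max[OF u] by simp
qed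

lemma modular_distortion_eq_id:
  assumes h: "distortion h"
    and modular: "\<And>x y. x \<in> {0..1} \<Longrightarrow> y \<in> {0..1} \<Longrightarrow> h x + h y = h (x * y) + h (x + y - x * y)"
    and u: "u \<in> {0..1}"
  shows "h u = u"
proof -
  have cont: "continuous_on {0..1} h" and h0: "h 0 = 0" and h1: "h 1 = 1"
    using h by (auto simp: distortion_def)
  have "h u - u \<le> 0"
    using modular by (intro modular_on_unit_interval_le_0[OF _ _ _ _ u])
      (auto intro!: continuous_intros cont simp: h0 h1 algebra_simps)
  moreover have "- (h u - u) \<le> 0"
    using modular by (intro modular_on_unit_interval_le_0[OF _ _ _ _ u])
      (auto intro!: continuous_intros cont simp: h0 h1 algebra_simps)
  ultimately show ?thesis
    by simp
qed

lemma drm_eq_mean: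
  assumes "\<And>u. u \<in> {0..1} \<Longrightarrow> h u = u" and "real_distribution \<mu>"
  shows "drm h \<mu> = mean \<mu>"
proof -
  interpret real_distribution \<mu> by fact
  have "(\<lambda>x. h (cdf \<mu> x)) = cdf \<mu>"
    using assms(1) cdf_nonneg cdf_bounded_prob by auto
  then show ?thesis
    by (simp add: drm_def mean_def interval_measure_cdf[OF assms(2)])
qed

lemma non_affine_distortion_not_modular:
  assumes "distortion h" and "\<not> (\<exists>c d. \<forall>\<mu>. value_dist \<mu> \<longrightarrow> drm h \<mu> = c * mean \<mu> + d)"
  obtains x y where "x \<in> {0..1}" "y \<in> {0..1}" "h x + h y \<noteq> h (x * y) + h (x + y - x * y)"
proof -
  have "drm h \<mu> = 1 * mean \<mu> + 0" if "value_dist \<mu>" and "\<And>u. u \<in> {0..1} \<Longrightarrow> h u = u" for \<mu>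
  proof -
    have "real_distribution \<mu>"
      using \<open>value_dist \<mu>\<close> by (auto simp: value_dist_def real_distribution_def real_distribution_axioms_def)
    with drm_eq_mean that(2) show ?thesis
      by simp
  qed
  then show ?thesis
    using assms that modular_distortion_eq_id by blast
qed

section \<open>Return distributions with eventually constant truncations\<close>

lemma weak_conv_m_eventually_const_unique:
  assumes \<mu>: "real_distribution \<mu>" and \<nu>: "real_distribution \<nu>"
    and const: "\<And>n. n \<ge> N \<Longrightarrow> M n = \<mu>" and conv: "weak_conv_m M \<nu>"
  shows "\<nu> = \<mu>"
proof (rule cdf_unique[OF \<nu> \<mu>], rule ext)
  interpret \<mu>: real_distribution \<mu> by fact
  interpret \<nu>: real_distribution \<nu> by fact
  fix x :: real
  have agree: "cdf \<nu> y = cdf \<mu> y" if "isCont (cdf \<nu>) y" for y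
  proof (rule LIMSEQ_unique)
    show "(\<lambda>n. cdf (M n) y) \<longlonglongrightarrow> cdf \<nu> y"
      using conv that by (simp add: weak_conv_m_def weak_conv_def)
    have "eventually (\<lambda>n. cdf (M n) y = cdf \<mu> y) sequentially"
      using const by (auto simp: eventually_sequentially)
    then show "(\<lambda>n. cdf (M n) y) \<longlonglongrightarrow> cdf \<mu> y"
      by (rule tendsto_eventually[OF eventually_mono]) auto
  qed
  \<comment> \<open>Approach \<open>x\<close> from the right through the co-countable set of continuity points of \<open>cdf \<nu>\<close>.\<close>
  have discont: "countable {a. \<not> isCont (cdf \<nu>) a}"
    by (intro mono_ctble_discont) (simp add: mono_def \<nu>.cdf_nondecreasing)
  have "\<exists>y. y \<in> {x <..< x + inverse (real (Suc n))} \<and> isCont (cdf \<nu>) y" for n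
    using open_minus_countable[OF discont, of "{x <..< x + inverse (real (Suc n))}"] by auto
  then obtain y where y: "\<And>n. y n \<in> {x <..< x + inverse (real (Suc n))}" "\<And>n. isCont (cdf \<nu>) (y n)"
    by metis
  have "\<forall>n. x \<le> y n \<and> y n \<le> x + inverse (real (Suc n))"
    using y(1) by (meson greaterThanLessThan_iff less_imp_le)
  then have "y \<longlonglongrightarrow> x"
    using LIMSEQ_inverse_real_of_nat[THEN tendsto_add[OF tendsto_const[of x]]]
    by (intro tendsto_sandwich[of "\<lambda>_. x" y _ "\<lambda>n. x + inverse (real (Suc n))"] always_eventually) auto
  with y(1) have to_x: "filterlim y (at_right x) sequentially"
    by (auto simp: filterlim_at intro!: always_eventually dest: less_imp_neq)
  have "(\<lambda>n. cdf \<nu> (y n)) \<longlonglongrightarrow> cdf \<nu> x"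
    using \<nu>.cdf_is_right_cont[of x] to_x by (auto simp: continuous_within intro: filterlim_compose)
  moreover have "(\<lambda>n. cdf \<mu> (y n)) \<longlonglongrightarrow> cdf \<mu> x"
    using \<mu>.cdf_is_right_cont[of x] to_x by (auto simp: continuous_within intro: filterlim_compose)
  then have "(\<lambda>n. cdf \<nu> (y n)) \<longlonglongrightarrow> cdf \<mu> x"
    using agree[OF y(2)] by simp
  ultimately show "cdf \<nu> x = cdf \<mu> x"
    by (rule LIMSEQ_unique)
qed

lemma return_dist_eventually_const:
  assumes "\<And>n. n \<ge> N \<Longrightarrow> trunc_ret Mt R g p n s a = \<mu>" "real_distribution \<mu>"
  shows "return_dist Mt R g p s a = \<mu>"
  unfolding return_dist_def
proof (rule the_equality)
  have "weak_conv_m (\<lambda>n. trunc_ret Mt R g p n s a) \<mu>"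
    unfolding weak_conv_m_def weak_conv_def
    using assms(1) by (intro allI impI tendsto_eventually) (auto simp: eventually_sequentially)
  then show "real_distribution \<mu> \<and> weak_conv_m (\<lambda>n. trunc_ret Mt R g p n s a) \<mu>"
    using assms(2) by simp
next
  fix \<nu> assume "real_distribution \<nu> \<and> weak_conv_m (\<lambda>n. trunc_ret Mt R g p n s a) \<nu>"
  then show "\<nu> = \<mu>"
    using weak_conv_m_eventually_const_unique[of \<mu> \<nu> N "\<lambda>n. trunc_ret Mt R g p n s a"] assms
    by blast
qed

section \<open>The counterexamples\<close>

lemma supnorm_singleton: "supnorm {s} {a} f = \<bar>f s a\<bar>"
  unfolding supnorm_def by simp

lemma bellman_not_contraction:
  assumes fin: "finite (set_pmf R)" "finite (set_pmf P1)" "finite (set_pmf P2)"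
    and same: "drm h (borel_pmf P1) = drm h (borel_pmf P2)"
    and differ: "drm h (borel_pmf (discounted_sum_pmf (1/2) R P1))
      \<noteq> drm h (borel_pmf (discounted_sum_pmf (1/2) R P2))"
  shows "\<exists>S A Mt R g rho0 Z1 Z2. mdp S A Mt R g rho0 \<and>
    value_distribution S A Z1 \<and> value_distribution S A Z2 \<and>
    (\<forall>p1 p2. greedy h S A Z1 p1 \<longrightarrow> greedy h S A Z2 p2 \<longrightarrow>
       \<not> (supnorm S A (\<lambda>s a. drm h (bellman Mt R g p1 Z1 s a) - drm h (bellman Mt R g p2 Z2 s a))
           \<le> g * supnorm S A (\<lambda>s a. drm h (Z1 s a) - drm h (Z2 s a))))"
proof (intro exI conjI allI impI)
  let ?Z1 = "\<lambda>s a :: nat. borel_pmf P1" and ?Z2 = "\<lambda>s a :: nat. borel_pmf P2"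
  let ?R = "\<lambda>s a :: nat. borel_pmf R" and ?Mt = "\<lambda>s a :: nat. 0 :: nat"
  show "mdp {0} {0} ?Mt ?R (1/2) (return_pmf 0)"
    by (simp add: mdp_def prob_space_borel_pmf)
  show "value_distribution {0} {0} ?Z1" "value_distribution {0} {0} ?Z2"
    using fin by (simp_all add: value_distribution_def value_dist_borel_pmf)
  fix p1 p2 :: "nat \<Rightarrow> nat"
  show "\<not> supnorm {0} {0} (\<lambda>s a. drm h (bellman ?Mt ?R (1/2) p1 ?Z1 s a) - drm h (bellman ?Mt ?R (1/2) p2 ?Z2 s a))
      \<le> 1/2 * supnorm {0} {0} (\<lambda>s a. drm h (?Z1 s a) - drm h (?Z2 s a))"
    using same differ unfolding bellman_def convolution_borel_pmf_scaled by (simp add: supnorm_singleton)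
qed

definition mix_pmf :: "real \<Rightarrow> 'a pmf \<Rightarrow> 'a pmf \<Rightarrow> 'a pmf" where
  "mix_pmf l U W = bernoulli_pmf l \<bind> (\<lambda>b. if b then U else W)"

lemma pmf_mix_pmf: "l \<in> {0..1} \<Longrightarrow> pmf (mix_pmf l U W) v = l * pmf U v + (1 - l) * pmf W v"
  by (simp add: mix_pmf_def pmf_bind)

lemma set_mix_pmf: "set_pmf (mix_pmf l U W) \<subseteq> set_pmf U \<union> set_pmf W"
  by (auto simp: mix_pmf_def split: if_splits)

lemma mix_pmf_1 [simp]: "mix_pmf 1 U W = U"
  by (rule pmf_eqI) (simp add: pmf_mix_pmf)

lemma mix_pmf_0 [simp]: "mix_pmf 0 U W = W"
  by (rule pmf_eqI) (simp add: pmf_mix_pmf)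

lemma bind_pmf_if_zero: "q \<bind> (\<lambda>a. if a = 0 then U else W) = mix_pmf (pmf q 0) U W"
proof (rule pmf_eqI)
  fix v
  have "pmf (q \<bind> (\<lambda>a. if a = 0 then U else W)) v
      = (\<integral>a. pmf W v + (pmf U v - pmf W v) * indicator {0} a \<partial>measure_pmf q)"
    by (auto simp: pmf_bind indicator_def intro!: Bochner_Integration.integral_cong)
  also have "\<dots> = pmf W v + (pmf U v - pmf W v) * pmf q 0"
  proof -
    have "integrable q (\<lambda>a. (pmf U v - pmf W v) * indicator {0} a)"
      by (intro integrable_mult_right integrable_real_indicator) (auto simp: emeasure_pmf_single)
    then show ?thesis
      by (subst Bochner_Integration.integral_add) (auto simp: measure_pmf_single)
  qed
  finally show "pmf (q \<bind> (\<lambda>a. if a = 0 then U else W)) v = pmf (mix_pmf (pmf q 0) U W) v"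
    by (simp add: pmf_mix_pmf pmf_le_1 algebra_simps)
qed

lemma continuous_on_drm_borel_pmf:
  assumes h: "distortion h" and V: "finite V" "\<And>l. l \<in> I \<Longrightarrow> set_pmf (P l) \<subseteq> V"
    and cont: "\<And>v. continuous_on I (\<lambda>l. pmf (P l) v)"
  shows "continuous_on I (\<lambda>l. drm h (borel_pmf (P l)))"
proof -
  have "continuous_on I (\<lambda>l. \<Sum>v\<in>V. pmf (P l) v * indicator A v)" for A
    by (intro continuous_on_sum continuous_on_mult_right cont)
  then have prob: "continuous_on I (\<lambda>l. measure_pmf.prob (P l) A)" for A
    by (rule continuous_on_eq) (use V in \<open>simp add: measure_pmf_eq_sum_indicator\<close>)
  have "continuous_on {0..1} h"
    using h by (simp add: distortion_def)
  then have h_prob: "continuous_on I (\<lambda>l. h (measure_pmf.prob (P l) A))" for A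
    by (rule continuous_on_compose2[OF _ prob]) auto
  have "continuous_on I (\<lambda>l. \<Sum>v\<in>V. v * (h (measure_pmf.prob (P l) {..v}) - h (measure_pmf.prob (P l) {..<v})))"
    by (intro continuous_on_sum continuous_on_mult_left continuous_on_diff h_prob)
  then show ?thesis
    by (rule continuous_on_eq) (simp add: drm_borel_pmf[OF h finite_subset[OF V(2) V(1)] V(1) V(2)])
qed

lemma continuous_on_drm_discounted_mix:
  assumes h: "distortion h"
    and fin: "finite (set_pmf R)" "finite (set_pmf U)" "finite (set_pmf W)"
  shows "continuous_on {0..1} (\<lambda>l. drm h (borel_pmf (discounted_sum_pmf g R (mix_pmf l U W))))"
proof (rule continuous_on_drm_borel_pmf[OF h])
  let ?V = "(\<lambda>(a, b). a + g * b) ` (set_pmf R \<times> (set_pmf U \<union> set_pmf W))"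
  show "finite ?V"
    using fin by simp
  show "set_pmf (discounted_sum_pmf g R (mix_pmf l U W)) \<subseteq> ?V" for l
    using set_mix_pmf[of l U W] by (auto simp: set_discounted_sum_pmf)
  fix v
  have eq: "pmf (discounted_sum_pmf g R (mix_pmf l U W)) v = (\<Sum>a\<in>set_pmf R. \<Sum>b\<in>set_pmf U \<union> set_pmf W.
      pmf R a * (l * pmf U b + (1 - l) * pmf W b) * indicator {v} (a + g * b))" if "l \<in> {0..1}" for l
  proof -
    have "pmf (discounted_sum_pmf g R (mix_pmf l U W)) v = (\<Sum>a\<in>set_pmf R. \<Sum>b\<in>set_pmf U \<union> set_pmf W.
        pmf R a * pmf (mix_pmf l U W) b * indicator {v} (a + g * b))"
      unfolding measure_pmf_single[of _ v, symmetric]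
      using fin set_mix_pmf[of l U W] by (intro measure_discounted_sum_pmf) auto
    then show ?thesis
      by (simp only: pmf_mix_pmf[OF that])
  qed
  have "continuous_on {0..1} (\<lambda>l. \<Sum>a\<in>set_pmf R. \<Sum>b\<in>set_pmf U \<union> set_pmf W.
      pmf R a * (l * pmf U b + (1 - l) * pmf W b) * indicator {v} (a + g * b))"
    by (intro continuous_on_sum continuous_on_mult continuous_on_add continuous_on_diff
        continuous_on_const continuous_on_id)
  then show "continuous_on {0..1} (\<lambda>l. pmf (discounted_sum_pmf g R (mix_pmf l U W)) v)"
    by (rule continuous_on_eq) (simp add: eq)
qed

text \<open>State 0 pays \<open>R\<close> and leads to state 1, where action 0 pays \<open>U\<close> and action 1 pays \<open>W\<close>;
  both lead to the absorbing state 2, which pays nothing.  \<open>chain_init\<close> is the return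
  distribution of the policy taking action 0; once \<open>\<beta>[W] < \<beta>[U]\<close> it is a fixed point of the
  greedy iteration.\<close>
definition chain_next :: "nat \<Rightarrow> nat \<Rightarrow> nat" where
  "chain_next s a = (if s = 0 then 1 else 2)"

lemma chain_next_simps [simp]: "chain_next 0 a = Suc 0" "chain_next (Suc 0) a = 2" "chain_next 2 a = 2"
  by (simp_all add: chain_next_def)

context
  fixes h :: "real \<Rightarrow> real" and g :: real and R U W :: "real pmf"
begin

definition chain_reward :: "nat \<Rightarrow> nat \<Rightarrow> real measure" where
  "chain_reward s a = borel_pmf (if s = 0 then R else if s = 1 then (if a = 0 then U else W) else return_pmf 0)"

lemma chain_reward_simps [simp]:
  "chain_reward 0 a = borel_pmf R" "chain_reward (Suc 0) a = borel_pmf (if a = 0 then U else W)"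
  "chain_reward 2 a = borel_pmf (return_pmf 0)"
  by (simp_all add: chain_reward_def)

definition chain_init :: "nat \<Rightarrow> nat \<Rightarrow> real measure" where
  "chain_init s a = (if s = 0 then borel_pmf (discounted_sum_pmf g R U) else chain_reward s a)"

definition chain_value :: "real \<Rightarrow> real" where
  "chain_value l = drm h (borel_pmf (discounted_sum_pmf g R (mix_pmf l U W)))"

lemma trunc_ret_chain_absorbing: "trunc_ret chain_next chain_reward g q n 2 = (\<lambda>a. borel_pmf (return_pmf 0))"
proof (induction n)
  case (Suc n)
  show ?case
    by (simp add: Suc.IH fun_eq_iff bind_borel_pmf convolution_borel_pmf_scaled discounted_sum_pmf_return_0)
qed (simp add: fun_eq_iff)

lemma trunc_ret_chain_middle:
  "trunc_ret chain_next chain_reward g q n 1 = (\<lambda>a. borel_pmf (if a = 0 then U else W))"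
  by (cases n) (simp_all add: fun_eq_iff trunc_ret_chain_absorbing bind_borel_pmf
      convolution_borel_pmf_scaled discounted_sum_pmf_return_0)

lemma return_dist_chain_start:
  "return_dist chain_next chain_reward g q 0 a = borel_pmf (discounted_sum_pmf g R (mix_pmf (pmf (q 1) 0) U W))"
proof (rule return_dist_eventually_const[of 1])
  fix n :: nat assume "1 \<le> n"
  then obtain m where "n = Suc m"
    by (cases n) auto
  then show "trunc_ret chain_next chain_reward g q n 0 a = borel_pmf (discounted_sum_pmf g R (mix_pmf (pmf (q 1) 0) U W))"
    using trunc_ret_chain_middle[of q m]
    by (simp add: bind_borel_pmf bind_pmf_if_zero convolution_borel_pmf_scaled)
qed (rule real_distribution_borel_pmf)

lemma objective_chain: "objective h chain_next chain_reward g (return_pmf 0) q = chain_value (pmf (q 1) 0)"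
  by (simp add: objective_def return_dist_chain_start chain_value_def)

lemma chain_optimal_exists:
  assumes "distortion h" "finite (set_pmf R)" "finite (set_pmf U)" "finite (set_pmf W)"
  shows "\<exists>p. optimal h {0, 1, 2} {0, 1} chain_next chain_reward g (return_pmf 0) p"
proof -
  obtain l where l: "l \<in> {0..1}" and max: "\<And>l'. l' \<in> {0..1} \<Longrightarrow> chain_value l' \<le> chain_value l"
    using continuous_attains_sup[of "{0..1}" chain_value] continuous_on_drm_discounted_mix[OF assms]
    by (auto simp: chain_value_def)
  define p where "p s = mix_pmf l (return_pmf 0) (return_pmf (1 :: nat))" for s :: nat
  have "policy {0, 1, 2} {0, 1} p"
    using set_mix_pmf by (fastforce simp: policy_def p_def)
  moreover have "objective h chain_next chain_reward g (return_pmf 0) q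
      \<le> objective h chain_next chain_reward g (return_pmf 0) p" for q
    using l max[of "pmf (q 1) 0"] by (simp add: objective_chain p_def pmf_mix_pmf pmf_le_1)
  ultimately show ?thesis
    by (auto simp: optimal_def)
qed

lemma chain_optimal_ge:
  assumes "optimal h {0, 1, 2} {0, 1} chain_next chain_reward g (return_pmf 0) p"
  shows "chain_value 0 \<le> chain_value (pmf (p 1) 0)"
proof -
  have "policy {0, 1, 2} {0, 1} (\<lambda>s. return_pmf 1)"
    by (simp add: policy_def)
  then show ?thesis
    using assms by (auto simp: optimal_def objective_chain dest!: spec[of _ "\<lambda>s. return_pmf 1"])
qed

lemma bellman_chain_init:
  assumes "p (Suc 0) = 0" "s \<in> {0, 1, 2}"
  shows "bellman chain_next chain_reward g p chain_init s a = chain_init s a"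
  using assms by (auto simp: bellman_def chain_init_def convolution_borel_pmf_scaled discounted_sum_pmf_return_0)

lemma bellman_iteration_chain:
  assumes UW: "drm h (borel_pmf W) < drm h (borel_pmf U)"
    and it: "bellman_iteration h {0, 1, 2} {0, 1} chain_next chain_reward g chain_init Zs ps"
  shows "\<forall>s\<in>{0, 1, 2}. \<forall>a\<in>{0, 1}. Zs k s a = chain_init s a" and "ps k (Suc 0) = 0"
proof -
  have greedy: "greedy h {0, 1, 2} {0, 1} (Zs k) (ps k)" for k
    using it by (simp add: bellman_iteration_def)
  have greedy_U: "ps k (Suc 0) = 0" if "\<forall>s\<in>{0, 1, 2}. \<forall>a\<in>{0, 1}. Zs k s a = chain_init s a" for k
  proof (rule ccontr)
    assume "ps k (Suc 0) \<noteq> 0"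
    then have "ps k (Suc 0) = 1" and "drm h (Zs k (Suc 0) 0) \<le> drm h (Zs k (Suc 0) (ps k (Suc 0)))"
      using greedy[of k] by (auto simp: greedy_def)
    then show False
      using that UW by (simp add: chain_init_def)
  qed
  show agree: "\<forall>s\<in>{0, 1, 2}. \<forall>a\<in>{0, 1}. Zs k s a = chain_init s a"
  proof (induction k)
    case 0
    then show ?case
      using it by (simp add: bellman_iteration_def)
  next
    case (Suc k)
    have "Zs (Suc k) s a = bellman chain_next chain_reward g (ps k) chain_init s a"
      if "s \<in> {0, 1, 2}" "a \<in> {0, 1}" for s a
    proof -
      have "chain_next s a \<in> {0, 1, 2}" "ps k (chain_next s a) \<in> {0, 1}"
        using greedy[of k] by (auto simp: greedy_def chain_next_def)
      then have "Zs k (chain_next s a) (ps k (chain_next s a)) = chain_init (chain_next s a) (ps k (chain_next s a))"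
        using Suc.IH by blast
      moreover have "Zs (Suc k) s a = bellman chain_next chain_reward g (ps k) (Zs k) s a"
        using it that unfolding bellman_iteration_def by blast
      ultimately show ?thesis
        by (simp only: bellman_def)
    qed
    then show ?case
      using bellman_chain_init greedy_U[OF Suc] by simp
  qed
  then show "ps k (Suc 0) = 0"
    by (rule greedy_U)
qed

lemma greedy_iterates_not_optimal:
  assumes UW: "drm h (borel_pmf W) < drm h (borel_pmf U)" and reversed: "chain_value 1 < chain_value 0"
    and it: "bellman_iteration h {0, 1, 2} {0, 1} chain_next chain_reward g chain_init Zs ps"
  shows "\<not> optimal h {0, 1, 2} {0, 1} chain_next chain_reward g (return_pmf 0) (\<lambda>s. return_pmf (ps k s))"
  using chain_optimal_ge reversed bellman_iteration_chain(2)[OF UW it] by fastforce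

lemma drm_iterates_below_optimal:
  assumes UW: "drm h (borel_pmf W) < drm h (borel_pmf U)" and reversed: "chain_value 1 < chain_value 0"
    and it: "bellman_iteration h {0, 1, 2} {0, 1} chain_next chain_reward g chain_init Zs ps"
    and opt: "optimal h {0, 1, 2} {0, 1} chain_next chain_reward g (return_pmf 0) p"
  shows "drm h (Zs k 0 0) < drm h (return_dist chain_next chain_reward g p 0 0)"
proof -
  have "drm h (Zs k 0 0) = chain_value 1"
    using bellman_iteration_chain(1)[OF UW it, of k] by (simp add: chain_init_def chain_value_def)
  also have "\<dots> < chain_value 0"
    by (rule reversed)
  also have "\<dots> \<le> chain_value (pmf (p 1) 0)"
    by (rule chain_optimal_ge[OF opt])
  also have "\<dots> = drm h (return_dist chain_next chain_reward g p 0 0)"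
    by (simp add: return_dist_chain_start chain_value_def)
  finally show ?thesis .
qed

lemma greedy_iteration_fails_on_chain:
  assumes h: "distortion h" and g: "0 \<le> g" "g < 1"
    and fin: "finite (set_pmf R)" "finite (set_pmf U)" "finite (set_pmf W)"
    and UW: "drm h (borel_pmf W) < drm h (borel_pmf U)"
    and reversed: "chain_value 1 < chain_value 0"
  shows "\<exists>S A Mt R g rho0 Z0. mdp S A Mt R g rho0 \<and> value_distribution S A Z0 \<and>
    (\<exists>p. optimal h S A Mt R g rho0 p) \<and>
    (\<forall>Zs ps. bellman_iteration h S A Mt R g Z0 Zs ps \<longrightarrow>
       (\<exists>N. \<forall>k\<ge>N. \<not> optimal h S A Mt R g rho0 (\<lambda>s. return_pmf (ps k s))) \<and>
       (\<forall>p. optimal h S A Mt R g rho0 p \<longrightarrow>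
          \<not> (\<forall>s\<in>S. \<forall>a\<in>A. (\<lambda>k. drm h (Zs k s a)) \<longlonglongrightarrow> drm h (return_dist Mt R g p s a))))"
proof -
  have "mdp {0, 1, 2} {0, 1} chain_next chain_reward g (return_pmf 0)"
    using g by (simp add: mdp_def chain_next_def chain_reward_def prob_space_borel_pmf)
  moreover have "value_distribution {0, 1, 2} {0, 1} chain_init"
    using fin by (auto simp: value_distribution_def chain_init_def chain_reward_def
        set_discounted_sum_pmf intro!: value_dist_borel_pmf)
  moreover have "\<not> (\<lambda>k. drm h (Zs k 0 0)) \<longlonglongrightarrow> drm h (return_dist chain_next chain_reward g p 0 0)"
    if "bellman_iteration h {0, 1, 2} {0, 1} chain_next chain_reward g chain_init Zs ps"
      "optimal h {0, 1, 2} {0, 1} chain_next chain_reward g (return_pmf 0) p" for Zs ps p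
    using drm_iterates_below_optimal[OF UW reversed that] bellman_iteration_chain(1)[OF UW that(1)]
    by (auto simp: LIMSEQ_const_iff)
  ultimately show ?thesis
    using chain_optimal_exists[OF h fin] greedy_iterates_not_optimal[OF UW reversed] by blast
qed
end

lemma coin_order_reversal:
  assumes h: "distortion h" and xy: "x \<in> {0..1}" "y \<in> {0..1}"
    and not_modular: "h x + h y \<noteq> h (x * y) + h (x + y - x * y)"
  obtains U W where "finite (set_pmf U)" "finite (set_pmf W)"
    "drm h (borel_pmf W) < drm h (borel_pmf U)"
    "drm h (borel_pmf (discounted_sum_pmf (1/2) (coin x) U))
      < drm h (borel_pmf (discounted_sum_pmf (1/2) (coin x) W))"
proof -
  define d where "d = h x + h y - h (x * y) - h (x + y - x * y)"
  define c where "c = 1 - h y + d / 2"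
  \<comment> \<open>The point mass at \<open>c\<close> beats \<open>coin y\<close> by \<open>d / 2\<close>, but after adding the reward
    \<open>coin x\<close> it loses by \<open>d / 4\<close>.\<close>
  have "drm h (borel_pmf (return_pmf c)) - drm h (borel_pmf (coin y)) = d / 2"
    using drm_return[OF h] drm_coin[OF h xy(2)] by (simp add: c_def)
  moreover have "drm h (borel_pmf (discounted_sum_pmf (1/2) (coin x) (return_pmf c)))
      - drm h (borel_pmf (discounted_sum_pmf (1/2) (coin x) (coin y))) = - d / 4"
    unfolding drm_discounted_coin_return[OF h xy(1)] drm_discounted_coin_coin[OF h xy] c_def d_def
    by (simp add: field_simps)
  moreover have "d \<noteq> 0"
    using not_modular by (simp add: d_def)
  ultimately show ?thesis
    using that[of "return_pmf c" "coin y"] that[of "coin y" "return_pmf c"] finite_set_coin[of y]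
    by (cases "d > 0") auto
qed

theorem mainTheorem1:
  fixes h :: "real \<Rightarrow> real"
  assumes "distortion h"
    and "\<not> (\<exists>c d. \<forall>\<mu>. value_dist \<mu> \<longrightarrow> drm h \<mu> = c * mean \<mu> + d)"
  shows
    "(\<exists>S A Mt R g rho0 Z0. mdp S A Mt R g rho0 \<and> value_distribution S A Z0 \<and>
        (\<exists>p. optimal h S A Mt R g rho0 p) \<and>
        (\<forall>Zs ps. bellman_iteration h S A Mt R g Z0 Zs ps \<longrightarrow>
           (\<exists>N. \<forall>k\<ge>N. \<not> optimal h S A Mt R g rho0 (\<lambda>s. return_pmf (ps k s))) \<and>
           (\<forall>p. optimal h S A Mt R g rho0 p \<longrightarrow>
              \<not> (\<forall>s\<in>S. \<forall>a\<in>A. (\<lambda>k. drm h (Zs k s a))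
                                  \<longlonglongrightarrow> drm h (return_dist Mt R g p s a)))))
     \<and>
     (\<exists>S A Mt R g rho0 Z1 Z2. mdp S A Mt R g rho0 \<and>
        value_distribution S A Z1 \<and> value_distribution S A Z2 \<and>
        (\<forall>p1 p2. greedy h S A Z1 p1 \<longrightarrow> greedy h S A Z2 p2 \<longrightarrow>
           \<not> (supnorm S A (\<lambda>s a. drm h (bellman Mt R g p1 Z1 s a) - drm h (bellman Mt R g p2 Z2 s a))
               \<le> g * supnorm S A (\<lambda>s a. drm h (Z1 s a) - drm h (Z2 s a)))))"
proof -
  obtain x y where xy: "x \<in> {0..1}" "y \<in> {0..1}"
    and not_modular: "h x + h y \<noteq> h (x * y) + h (x + y - x * y)"
    using non_affine_distortion_not_modular[OF assms] .
  obtain U W where UW: "finite (set_pmf U)" "finite (set_pmf W)"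
      "drm h (borel_pmf W) < drm h (borel_pmf U)"
    and reversed: "chain_value h (1/2) (coin x) U W 1 < chain_value h (1/2) (coin x) U W 0"
    using coin_order_reversal[OF assms(1) xy not_modular] by (auto simp: chain_value_def)
  have discount: "0 \<le> (1/2 :: real)" "(1/2 :: real) < 1"
    by simp_all
  let ?c = "drm h (borel_pmf (coin y))"
  have same: "drm h (borel_pmf (coin y)) = drm h (borel_pmf (return_pmf ?c))"
    using assms(1) by (simp add: drm_return)
  have differ: "drm h (borel_pmf (discounted_sum_pmf (1/2) (coin x) (coin y)))
      \<noteq> drm h (borel_pmf (discounted_sum_pmf (1/2) (coin x) (return_pmf ?c)))"
    using drm_discounted_coin_gap[OF assms(1) xy] not_modular by auto
  from greedy_iteration_fails_on_chain[OF assms(1) discount finite_set_coin UW reversed]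
    bellman_not_contraction[OF finite_set_coin finite_set_coin _ same differ]
  show ?thesis
    by simp
qed

end
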